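(* Let $j$ be the closed topology on the topos of graphs $\mathcal{G}$, and let $S$ be a subgraph of a graph $G$. Then the $j$-closure $\bar S$ of $S$ in $G$ is obtained by adding to $S$ all the nodes of $G$ (i.e., $\bar S$ is the spanning subgraph generated by $S$). Consequently a subgraph of $G$ is $j$-dense if and only if it contains all the arcs of $G$; in particular there is a minimum $j$-dense subgraph of $G$, namely the one consisting of all arcs of $G$ (with their endpoints).
   Context: The topos of graphs $\mathcal{G}=\mathbf{Sets}^{\Gamma^{op}}$, where $\Gamma$ has objects $N, A$ and two arrows $s,t:N\to A$; a graph $G$ has node set $G(N)$, arc set $G(A)$ and source/target maps, and morphisms preserve source and target. The subobject classifier $\Omega$ has nodes $0_N, N$ and arcs $0_A$ (loop on $0_N$), $s$ (from $N$ to $0_N$), $t$ (from $0_N$ to $N$), $\binom{s}{t}$ and $A$ (loops on $N$). For a subgraph $S\hookrightarrow G$, its characteristic map $\chi:G\to\Omega$ sends nodes not in $S$ to $0_N$, nodes in $S$ to $N$, arcs in $S$ to $A$, and an arc not in $S$ to $0_A$, $s$, $t$ or $\binom{s}{t}$ according as neither endpoint, only its source, only its target, or both endpoints lie in $S$. The closed topology is the morphism $j:\Omega\to\Omega$ with $j(0_N)=j(N)=N$, $j(0_A)=j(s)=j(t)=j(\binom{s}{t})=\binom{s}{t}$, $j(A)=A$ (equivalently $j=(-)\vee\binom{s}{t}$). For a topology $j$, the $j$-closure of $S\hookrightarrow G$ is the subgraph classified by $j\circ\chi$, and $S$ is $j$-dense if its closure is all of $G$. A spanning subgraph of $G$ is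 a subgraph containing all nodes of $G$. *)

theory Defs
  imports Main
begin

text \<open>A graph (object of the presheaf topos Sets^(Gamma^op)), presented concretely by
  a node set, an arc set and source/target maps.\<close>
record ('n, 'a) graph =
  nodes :: "'n set"
  arcs  :: "'a set"
  src   :: "'a \<Rightarrow> 'n"
  tgt   :: "'a \<Rightarrow> 'n"

definition wf_graph :: "('n, 'a) graph \<Rightarrow> bool" where
  "wf_graph G \<longleftrightarrow> (\<forall>e \<in> arcs G. src G e \<in> nodes G \<and> tgt G e \<in> nodes G)"

type_synonym ('n, 'a) subgraph = "'n set \<times> 'a set"

definition is_subgraph :: "('n, 'a) graph \<Rightarrow> ('n, 'a) subgraph \<Rightarrow> bool" where
  "is_subgraph G S \<longleftrightarrow> fst S \<subseteq> nodes G \<and> snd S \<subseteq> arcs G \<and>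
     (\<forall>e \<in> snd S. src G e \<in> fst S \<and> tgt G e \<in> fst S)"

definition subgraph_le :: "('n, 'a) subgraph \<Rightarrow> ('n, 'a) subgraph \<Rightarrow> bool" where
  "subgraph_le S T \<longleftrightarrow> fst S \<subseteq> fst T \<and> snd S \<subseteq> snd T"

datatype omega_node = ONode0 | ONodeN
datatype omega_arc = OArc0 | OArcS | OArcT | OArcST | OArcA

fun omega_src :: "omega_arc \<Rightarrow> omega_node" where
  "omega_src OArc0 = ONode0"
| "omega_src OArcS = ONodeN"
| "omega_src OArcT = ONode0"
| "omega_src OArcST = ONodeN"
| "omega_src OArcA = ONodeN"

fun omega_tgt :: "omega_arc \<Rightarrow> omega_node" where
  "omega_tgt OArc0 = ONode0"
| "omega_tgt OArcS = ONode0"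
| "omega_tgt OArcT = ONodeN"
| "omega_tgt OArcST = ONodeN"
| "omega_tgt OArcA = ONodeN"

type_synonym ('n, 'a) omega_map = "('n \<Rightarrow> omega_node) \<times> ('a \<Rightarrow> omega_arc)"

definition chi :: "('n, 'a) graph \<Rightarrow> ('n, 'a) subgraph \<Rightarrow> ('n, 'a) omega_map" where
  "chi G S =
    ((\<lambda>x. if x \<in> fst S then ONodeN else ONode0),
     (\<lambda>e. if e \<in> snd S then OArcA
          else if src G e \<in> fst S \<and> tgt G e \<in> fst S then OArcST
          else if src G e \<in> fst S then OArcS
          else if tgt G e \<in> fst S then OArcT
          else OArc0))"

text \<open>The closed topology j = (-) \<or> (s t).\<close>
fun j_node :: "omega_node \<Rightarrow> omega_node" where
  "j_node ONode0 = ONodeN"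
| "j_node ONodeN = ONodeN"

fun j_arc :: "omega_arc \<Rightarrow> omega_arc" where
  "j_arc OArc0 = OArcST"
| "j_arc OArcS = OArcST"
| "j_arc OArcT = OArcST"
| "j_arc OArcST = OArcST"
| "j_arc OArcA = OArcA"

text \<open>The subgraph of G classified by a morphism phi : G \<rightarrow> Omega (pullback of true).\<close>
definition classified :: "('n, 'a) graph \<Rightarrow> ('n, 'a) omega_map \<Rightarrow> ('n, 'a) subgraph" where
  "classified G phi =
    ({x \<in> nodes G. fst phi x = ONodeN}, {e \<in> arcs G. snd phi e = OArcA})"

definition j_closure :: "('n, 'a) graph \<Rightarrow> ('n, 'a) subgraph \<Rightarrow> ('n, 'a) subgraph" where
  "j_closure G S = classified G (j_node \<circ> fst (chi G S), j_arc \<circ> snd (chi G S))"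

definition j_dense :: "('n, 'a) graph \<Rightarrow> ('n, 'a) subgraph \<Rightarrow> bool" where
  "j_dense G S \<longleftrightarrow> j_closure G S = (nodes G, arcs G)"

end

theory Submission
  imports Defs
begin

text \<open>The closed topology sends every node of \<open>\<Omega>\<close> to \<open>N\<close> and fixes only the arc \<open>A\<close>.
  Hence the closure of \<open>S\<close> contains every node of \<open>G\<close>, while an arc lies in it exactly
  when \<open>\<chi>\<close> already sends it to \<open>A\<close>, i.e. when it lies in \<open>S\<close>.\<close>

lemma j_node_eq_N [simp]: "j_node x = ONodeN"
  by (cases x) simp_all

lemma j_arc_eq_A_iff [simp]: "j_arc x = OArcA \<longleftrightarrow> x = OArcA"
  by (cases x) simp_all

lemma snd_chi_eq_A_iff: "snd (chi G S) e = OArcA \<longleftrightarrow> e \<in> snd S"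
  by (simp add: chi_def)

lemma j_closure_eq:
  assumes "snd S \<subseteq> arcs G"
  shows "j_closure G S = (nodes G, snd S)"
  using assms by (auto simp: j_closure_def classified_def snd_chi_eq_A_iff)

lemma j_dense_iff:
  assumes "snd S \<subseteq> arcs G"
  shows "j_dense G S \<longleftrightarrow> arcs G \<subseteq> snd S"
  using assms by (auto simp: j_dense_def j_closure_eq)

definition arc_subgraph :: "('n, 'a) graph \<Rightarrow> ('n, 'a) subgraph" where
  "arc_subgraph G = (src G ` arcs G \<union> tgt G ` arcs G, arcs G)"

lemma is_subgraph_arc_subgraph: "wf_graph G \<Longrightarrow> is_subgraph G (arc_subgraph G)"
  by (auto simp: arc_subgraph_def is_subgraph_def wf_graph_def)

lemma j_dense_arc_subgraph: "j_dense G (arc_subgraph G)"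
  by (simp add: j_dense_iff arc_subgraph_def)

lemma arc_subgraph_le:
  assumes "is_subgraph G S" and "arcs G \<subseteq> snd S"
  shows "subgraph_le (arc_subgraph G) S"
  using assms by (auto simp: subgraph_le_def arc_subgraph_def is_subgraph_def)

theorem theorem2:
  fixes G :: "('n, 'a) graph"
  assumes "wf_graph G"
  shows "(\<forall>S. is_subgraph G S \<longrightarrow> j_closure G S = (nodes G, snd S))
       \<and> (\<forall>S. is_subgraph G S \<longrightarrow> (j_dense G S \<longleftrightarrow> arcs G \<subseteq> snd S))
       \<and> (let M = (src G ` arcs G \<union> tgt G ` arcs G, arcs G) in
            is_subgraph G M \<and> j_dense G M \<and>
            (\<forall>S. is_subgraph G S \<and> j_dense G S \<longrightarrow> subgraph_le M S))"
proof -
  have arcs_sub: "snd S \<subseteq> arcs G" if "is_subgraph G S" for S :: "('n, 'a) subgraph"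
    using that by (simp add: is_subgraph_def)
  have closure: "j_closure G S = (nodes G, snd S)" if "is_subgraph G S" for S
    using j_closure_eq [OF arcs_sub [OF that]] .
  have dense: "j_dense G S \<longleftrightarrow> arcs G \<subseteq> snd S" if "is_subgraph G S" for S
    using j_dense_iff [OF arcs_sub [OF that]] .
  have minimal: "subgraph_le (arc_subgraph G) S" if "is_subgraph G S" and "j_dense G S" for S
    using arc_subgraph_le [OF that(1)] dense [OF that(1)] that(2) by simp
  show ?thesis
    unfolding Let_def arc_subgraph_def [symmetric]
    using closure dense minimal is_subgraph_arc_subgraph [OF assms] j_dense_arc_subgraph
    by blast
qed

end
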